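(* Let $n \ge 1$ and $t \ge 0$ be integers. If there is a $t$-resilient asynchronous message-passing protocol solving the colored cross-blockchain transaction task $(\mathcal{I}, \mathcal{O}, \Delta)$ on $n+1$ blockchains, then there is a $t$-resilient asynchronous message-passing protocol solving the colorless cross-blockchain transaction task $(\mathcal{I}, \mathcal{O}', \Xi)$ on $n+1$ blockchains. Both tasks are defined in the context.
   Context: Setting. There are $n+1$ distinct blockchains $C_0,\dots,C_n$. An $(n+1)$-party cross-blockchain transaction touches exactly one block $v_i$ on each blockchain $C_i$. Input complex $\mathcal{I}$. The vertices are the pairs $(v_i, a)$ with $0 \le i \le n$ and $a \in \{0,1,\bot\}$. Here $0$ means not committed, $1$ means committed, and $\bot$ means the block's branch was suspended by a fork. A nonempty set of vertices is a simplex if and only if its vertices involve pairwise distinct blocks. Colored output complex $\mathcal{O}$. The vertices are the pairs $(v_i, b)$ with $b \in \{0,1\}$, where $1$ means committed and $0$ means aborted. A nonempty set of vertices is a simplex if and only if its vertices involve pairwise distinct blocks and all carry the same value $b$. Hence $\mathcal{O}$ has two connected components. Colored carrier map $\Delta$. For a simplex $\sigma$ of $\mathcal{I}$ with block set $B(\sigma)$: - $\Delta(\sigma)$ is the simplex $\{(v,1) : v \in B(\sigma)\}$ together with its faces, if all input values in $\sigma$ are $1$; - it is $\{(v,0) : v \in B(\sigma)\}$ together with its faces, if some input value in $\sigma$ is $\bot$; - otherwise it is the subcomplex of $\mathcal{O}$ consisting of all simplices whose blocks lie in $B(\sigma)$, i.e. both the all-$0$ and the all-$1$ simplices on $B(\sigma)$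 and their faces. Colorless task. The colorless output complex $\mathcal{O}'$ has vertices $0$ and $1$ and only the simplices $\{0\}$ and $\{1\}$. The colorless carrier map is obtained from $\Delta$ by forgetting block identities: - $\Xi(\sigma)=\{1\}$ if all input values in $\sigma$ are $1$; - $\Xi(\sigma)=\{0\}$ if some input value in $\sigma$ is $\bot$; - $\Xi(\sigma)=\mathcal{O}'$ otherwise. Computational model. There are $n+1$ processes (process $i$ corresponds to blockchain $C_i$) communicating by asynchronous message passing, with at most $t$ crash failures. Process $i$ starts with an input vertex $(v_i,a_i)$ of $\mathcal{I}$. - A protocol solves the colored task if in every execution with at most $t$ crashes each non-crashed process $i$ eventually decides an output vertex $(v_i,b_i)$ of $\mathcal{O}$, and the set of decided vertices is a simplex of $\Delta(\sigma)$, where $\sigma$ is the simplex of inputs of the participating processes. - A protocol solves the colorless task if each non-crashed process eventually decides a value in $\{0,1\}$, and the set of decided values is a simplex of $\Xi(\sigma)$. *)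

theory Defs
  imports Main "HOL-Library.Multiset"
begin

text \<open>Input values: 0 = not committed, 1 = committed, Bot = suspended by a fork.\<close>
datatype inval = Zero | One | Bot

text \<open>Simplices of the input complex: nonempty finite sets of vertices (block, value)
  involving pairwise distinct blocks.\<close>
definition input_simplex :: "('v \<times> inval) set \<Rightarrow> bool" where
  "input_simplex \<sigma> \<longleftrightarrow> finite \<sigma> \<and> \<sigma> \<noteq> {} \<and> inj_on fst \<sigma>"

text \<open>Simplices of the colored output complex: pairwise distinct blocks, all carrying the
  same value (True = committed, False = aborted).\<close>
definition output_simplex :: "('v \<times> bool) set \<Rightarrow> bool" where
  "output_simplex \<tau> \<longleftrightarrow> finite \<tau> \<and> \<tau> \<noteq> {} \<and> inj_on fst \<tau> \<and> (\<exists>b. \<forall>x\<in>\<tau>. snd x = b)"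

definition blocks :: "('v \<times> 'a) set \<Rightarrow> 'v set" where
  "blocks \<sigma> = fst ` \<sigma>"

definition Delta :: "('v \<times> inval) set \<Rightarrow> ('v \<times> bool) set set" where
  "Delta \<sigma> =
    (if \<forall>x\<in>\<sigma>. snd x = One then
       {\<tau>. \<tau> \<noteq> {} \<and> \<tau> \<subseteq> {(v, True) | v. v \<in> blocks \<sigma>}}
     else if \<exists>x\<in>\<sigma>. snd x = Bot then
       {\<tau>. \<tau> \<noteq> {} \<and> \<tau> \<subseteq> {(v, False) | v. v \<in> blocks \<sigma>}}
     else {\<tau>. output_simplex \<tau> \<and> blocks \<tau> \<subseteq> blocks \<sigma>})"

text \<open>Colorless carrier map: output complex O' has vertices 0,1 (False, True) and simplices
  {0},{1} only.\<close>
definition Xi :: "('v \<times> inval) set \<Rightarrow> bool set set" where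
  "Xi \<sigma> =
    (if \<forall>x\<in>\<sigma>. snd x = One then {{True}}
     else if \<exists>x\<in>\<sigma>. snd x = Bot then {{False}}
     else {{True}, {False}})"

text \<open>A protocol for processes 0..n: initial local state from process id and input; a
  step of process p takes its local state and optionally one received message
  (sender, payload) and returns a new local state and a list of messages
  (destination, payload) to send; the decision map reads the (possibly absent)
  decision off the local state.\<close>
record ('i, 's, 'm, 'o) protocol =
  pinit :: "nat \<Rightarrow> 'i \<Rightarrow> 's"
  ptrans :: "nat \<Rightarrow> 's \<Rightarrow> (nat \<times> 'm) option \<Rightarrow> 's \<times> (nat \<times> 'm) list"
  pdec :: "'s \<Rightarrow> 'o option"

text \<open>Configuration: local states and the multiset of messages in transit
  (sender, destination, payload).\<close>
type_synonym ('s, 'm) config = "(nat \<Rightarrow> 's) \<times> (nat \<times> nat \<times> 'm) multiset"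

text \<open>Events: None = no step; Some (p, r) = process p takes a step, receiving r
  (either nothing or an in-transit message addressed to p).\<close>
type_synonym 'm event = "(nat \<times> (nat \<times> nat \<times> 'm) option) option"

definition step_ok ::
  "('i, 's, 'm, 'o, 'z) protocol_scheme \<Rightarrow> nat \<Rightarrow> ('s, 'm) config \<Rightarrow> 'm event
     \<Rightarrow> ('s, 'm) config \<Rightarrow> bool" where
  "step_ok P n c ev c' \<longleftrightarrow>
    (case ev of
       None \<Rightarrow> c' = c
     | Some (p, r) \<Rightarrow>
         p \<le> n \<and>
         (case r of None \<Rightarrow> True | Some e \<Rightarrow> e \<in># snd c \<and> fst (snd e) = p) \<and>
         (let res = ptrans P p (fst c p) (map_option (\<lambda>(s, d, m). (s, m)) r) in
           c' = ((fst c)(p := fst res),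
                 (snd c - (case r of None \<Rightarrow> {#} | Some e \<Rightarrow> {#e#}))
                   + mset (map (\<lambda>(d, m). (p, d, m)) (snd res)))))"

definition run ::
  "('i, 's, 'm, 'o, 'z) protocol_scheme \<Rightarrow> nat \<Rightarrow> (nat \<Rightarrow> 'i)
     \<Rightarrow> (nat \<Rightarrow> ('s, 'm) config) \<Rightarrow> (nat \<Rightarrow> 'm event) \<Rightarrow> bool" where
  "run P n x C ev \<longleftrightarrow>
    C 0 = ((\<lambda>i. pinit P i (x i)), {#}) \<and> (\<forall>k. step_ok P n (C k) (ev k) (C (Suc k)))"

definition steps_of :: "(nat \<Rightarrow> 'm event) \<Rightarrow> nat \<Rightarrow> nat set" where
  "steps_of ev p = {k. \<exists>r. ev k = Some (p, r)}"

text \<open>A process is correct (non-crashed) iff it takes infinitely many steps.\<close>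
definition correct :: "(nat \<Rightarrow> 'm event) \<Rightarrow> nat \<Rightarrow> bool" where
  "correct ev p \<longleftrightarrow> infinite (steps_of ev p)"

definition admissible ::
  "nat \<Rightarrow> nat \<Rightarrow> (nat \<Rightarrow> ('s, 'm) config) \<Rightarrow> (nat \<Rightarrow> 'm event) \<Rightarrow> bool" where
  "admissible n t C ev \<longleftrightarrow>
    card {p \<in> {0..n}. \<not> correct ev p} \<le> t \<and>
    (\<forall>k e. e \<in># snd (C k) \<longrightarrow> fst (snd e) \<le> n \<longrightarrow> correct ev (fst (snd e)) \<longrightarrow>
       (\<exists>k'\<ge>k. ev k' = Some (fst (snd e), Some e)))"

definition decided ::
  "('i, 's, 'm, 'o, 'z) protocol_scheme \<Rightarrow> (nat \<Rightarrow> ('s, 'm) config) \<Rightarrow> nat \<Rightarrow> 'o \<Rightarrow> bool" where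
  "decided P C i b \<longleftrightarrow> (\<exists>k. pdec P (fst (C k) i) = Some b)"

definition solves ::
  "('i, 's, 'm, 'o) protocol \<Rightarrow> nat \<Rightarrow> nat \<Rightarrow> (nat \<Rightarrow> 'i) set
     \<Rightarrow> ((nat \<Rightarrow> 'i) \<Rightarrow> (nat \<times> 'o) set \<Rightarrow> bool) \<Rightarrow> bool" where
  "solves P n t Inputs Valid \<longleftrightarrow>
    (\<forall>x \<in> Inputs. \<forall>C ev. run P n x C ev \<and> admissible n t C ev \<longrightarrow>
       (\<forall>i\<le>n. correct ev i \<longrightarrow> (\<exists>b. decided P C i b)) \<and>
       (\<forall>i\<le>n. \<forall>k k' b. k \<le> k' \<longrightarrow> pdec P (fst (C k) i) = Some b
                         \<longrightarrow> pdec P (fst (C k') i) = Some b) \<and>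
       Valid x {(i, b). i \<le> n \<and> decided P C i b})"

definition tx_inputs :: "nat \<Rightarrow> (nat \<Rightarrow> 'v \<times> inval) set" where
  "tx_inputs n = {x. inj_on (fst \<circ> x) {0..n}}"

definition input_of :: "nat \<Rightarrow> (nat \<Rightarrow> 'v \<times> inval) \<Rightarrow> ('v \<times> inval) set" where
  "input_of n x = x ` {0..n}"

definition colored_valid ::
  "nat \<Rightarrow> (nat \<Rightarrow> 'v \<times> inval) \<Rightarrow> (nat \<times> ('v \<times> bool)) set \<Rightarrow> bool" where
  "colored_valid n x D \<longleftrightarrow>
    (\<forall>(i, w) \<in> D. fst w = fst (x i)) \<and>
    (snd ` D \<noteq> {} \<longrightarrow> snd ` D \<in> Delta (input_of n x))"

definition colorless_valid ::
  "nat \<Rightarrow> (nat \<Rightarrow> 'v \<times> inval) \<Rightarrow> (nat \<times> bool) set \<Rightarrow> bool" where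
  "colorless_valid n x D \<longleftrightarrow>
    (snd ` D \<noteq> {} \<longrightarrow> snd ` D \<in> Xi (input_of n x))"

definition solves_colored :: "('v \<times> inval, 's, 'm, 'v \<times> bool) protocol \<Rightarrow> nat \<Rightarrow> nat \<Rightarrow> bool" where
  "solves_colored P n t \<longleftrightarrow> solves P n t (tx_inputs n) (colored_valid n)"

definition solves_colorless :: "('v \<times> inval, 's, 'm, bool) protocol \<Rightarrow> nat \<Rightarrow> nat \<Rightarrow> bool" where
  "solves_colorless P n t \<longleftrightarrow> solves P n t (tx_inputs n) (colorless_valid n)"

end

theory Submission
  imports Defs
begin

text \<open>A protocol for the colored task is turned into one for the colorless task by running it
  unchanged and forgetting the block in each decided vertex (v, b), keeping only the value b.
  Runs, admissibility, termination and irrevocability are untouched by this relabelling, and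
  validity is transported because every simplex of Delta(sigma) carries a single value, which
  is exactly the value Xi(sigma) allows.\<close>

definition map_decision :: "('o \<Rightarrow> 'p) \<Rightarrow> ('i, 's, 'm, 'o) protocol \<Rightarrow> ('i, 's, 'm, 'p) protocol"
  where "map_decision f P = \<lparr>pinit = pinit P, ptrans = ptrans P, pdec = map_option f \<circ> pdec P\<rparr>"

lemma run_map_decision [simp]: "run (map_decision f P) n x C ev = run P n x C ev"
proof -
  have "pinit (map_decision f P) = pinit P" "ptrans (map_decision f P) = ptrans P"
    by (simp_all add: map_decision_def)
  then show ?thesis
    unfolding run_def step_ok_def by (simp only:)
qed

lemma pdec_map_decision [simp]: "pdec (map_decision f P) s = map_option f (pdec P s)"
  by (simp add: map_decision_def)

lemma decided_map_decision:
  "decided (map_decision f P) C i b \<longleftrightarrow> (\<exists>w. decided P C i w \<and> f w = b)"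
  by (auto simp: decided_def)

lemma decisions_map_decision:
  "{(i, b). i \<le> n \<and> decided (map_decision f P) C i b}
     = apsnd f ` {(i, w). i \<le> n \<and> decided P C i w}"
  by (auto simp: decided_map_decision image_iff) blast

lemma solves_map_decision:
  assumes "solves P n t Inputs Valid"
    and "\<And>x D. x \<in> Inputs \<Longrightarrow> Valid x D \<Longrightarrow> Valid' x (apsnd f ` D)"
  shows "solves (map_decision f P) n t Inputs Valid'"
  unfolding solves_def
proof (rule ballI, intro allI impI, intro conjI)
  fix x C ev
  assume x: "x \<in> Inputs" and "run (map_decision f P) n x C ev \<and> admissible n t C ev"
  then have terminates: "\<forall>i\<le>n. correct ev i \<longrightarrow> (\<exists>w. decided P C i w)"
    and irrevocable: "\<forall>i\<le>n. \<forall>k k' w. k \<le> k' \<longrightarrow> pdec P (fst (C k) i) = Some w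
                        \<longrightarrow> pdec P (fst (C k') i) = Some w"
    and valid: "Valid x {(i, w). i \<le> n \<and> decided P C i w}"
    using assms(1) unfolding solves_def by simp_all
  show "\<forall>i\<le>n. correct ev i \<longrightarrow> (\<exists>b. decided (map_decision f P) C i b)"
    using terminates by (auto simp: decided_map_decision)
  show "\<forall>i\<le>n. \<forall>k k' b. k \<le> k' \<longrightarrow> pdec (map_decision f P) (fst (C k) i) = Some b
                        \<longrightarrow> pdec (map_decision f P) (fst (C k') i) = Some b"
    using irrevocable by fastforce
  show "Valid' x {(i, b). i \<le> n \<and> decided (map_decision f P) C i b}"
    unfolding decisions_map_decision using assms(2)[OF x valid] .
qed

lemma Delta_values_in_Xi:
  assumes "\<tau> \<noteq> {}" and "\<tau> \<in> Delta \<sigma>"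
  shows "snd ` \<tau> \<in> Xi \<sigma>"
proof -
  consider (committed) "\<forall>x\<in>\<sigma>. snd x = One"
    | (suspended) "\<not> (\<forall>x\<in>\<sigma>. snd x = One)" "\<exists>x\<in>\<sigma>. snd x = Bot"
    | (mixed) "\<not> (\<forall>x\<in>\<sigma>. snd x = One)" "\<not> (\<exists>x\<in>\<sigma>. snd x = Bot)"
    by blast
  then show ?thesis
  proof cases
    case committed
    with assms have "\<tau> \<subseteq> {(v, True) | v. v \<in> blocks \<sigma>}" by (simp add: Delta_def)
    with assms(1) have "snd ` \<tau> = {True}" by force
    with committed show ?thesis by (simp add: Xi_def)
  next
    case suspended
    with assms have "\<tau> \<subseteq> {(v, False) | v. v \<in> blocks \<sigma>}" by (simp add: Delta_def)
    with assms(1) have "snd ` \<tau> = {False}" by force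
    with suspended show ?thesis by (simp add: Xi_def)
  next
    case mixed
    with assms obtain b where "\<forall>x\<in>\<tau>. snd x = b" by (auto simp: Delta_def output_simplex_def)
    with assms(1) have "snd ` \<tau> = {b}" by force
    with mixed show ?thesis by (cases b) (simp_all add: Xi_def)
  qed
qed

lemma colorless_valid_forget_blocks:
  assumes "colored_valid n x D"
  shows "colorless_valid n x (apsnd snd ` D)"
proof -
  have "snd ` apsnd snd ` D = snd ` snd ` D"
    by (force simp: image_image)
  with assms show ?thesis
    by (auto simp: colored_valid_def colorless_valid_def intro: Delta_values_in_Xi)
qed

theorem lemma3:
  fixes n t :: nat
    and P :: "('v \<times> inval, 's, 'm, 'v \<times> bool) protocol"
  assumes "n \<ge> 1"
    and "solves_colored P n t"
  shows "\<exists>Q :: ('v \<times> inval, 's, 'm, bool) protocol. solves_colorless Q n t"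
proof
  show "solves_colorless (map_decision snd P) n t"
    using assms(2) unfolding solves_colored_def solves_colorless_def
    by (rule solves_map_decision) (rule colorless_valid_forget_blocks)
qed

end
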